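(* Let $(Y,X_1,X_2)$ be a random vector with $Y\in\mathbb{R}$, $X_1\in\mathbb{R}^{p_1}$, $X_2\in\mathbb{R}^{p_2}$ ($p_1,p_2$ positive integers), with finite second moments. Use the squared error loss $L(f,(y,x_1,x_2))=(y-f(x_1,x_2))^2$. Let $\beta=(\beta_1,\beta_2)$ with $\beta_1\in\mathbb{R}^{p_1}$, $\beta_2\in\mathbb{R}^{p_2}$, and $f_\beta(x)=x_1'\beta_1+x_2'\beta_2$. Then $$e_{\text{switch}}(f_\beta)-e_{\text{orig}}(f_\beta)=2\,\text{Cov}(Y,X_1)\beta_1-2\beta_2'\,\text{Cov}(X_2,X_1)\beta_1,$$ and, for a sample $\mathbf{y}\in\mathbb{R}^n$, $\mathbf{X}=[\mathbf{X}_1\ \mathbf{X}_2]$ ($n\times(p_1+p_2)$, $n\ge 2$), $$\hat e_{\text{switch}}(f_\beta)=\frac1n\left\{\mathbf{y}'\mathbf{y}-2\begin{bmatrix}\mathbf{X}_1'\mathbf{W}\mathbf{y}\\ \mathbf{X}_2'\mathbf{y}\end{bmatrix}'\beta+\beta'\begin{bmatrix}\mathbf{X}_1'\mathbf{X}_1 & \mathbf{X}_1'\mathbf{W}\mathbf{X}_2\\ \mathbf{X}_2'\mathbf{W}\mathbf{X}_1 & \mathbf{X}_2'\mathbf{X}_2\end{bmatrix}\beta\right\},$$ where $\mathbf{W}:=\frac{1}{n-1}(\mathbf{1}_n\mathbf{1}_n'-\mathbf{I}_n)$, $\mathbf{1}_n$ is the all-ones vector and $\mathbf{I}_n$ the 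identity.
   Context: For a model $f$: $e_{\text{orig}}(f):=\mathbb{E}L(f,(Y,X_1,X_2))$; $e_{\text{switch}}(f):=\mathbb{E}L(f,(Y^{(b)},X_1^{(a)},X_2^{(b)}))$ where $(Y^{(a)},X_1^{(a)},X_2^{(a)})$, $(Y^{(b)},X_1^{(b)},X_2^{(b)})$ are independent copies of $(Y,X_1,X_2)$. For a sample with rows $i=1,\dots,n$ (outcome $\mathbf{y}_{[i]}$, covariate rows $\mathbf{X}_{1[i,\cdot]},\mathbf{X}_{2[i,\cdot]}$): $\hat e_{\text{switch}}(f):=\frac{1}{n(n-1)}\sum_{i=1}^n\sum_{j\ne i}L\{f,(\mathbf{y}_{[j]},\mathbf{X}_{1[i,\cdot]},\mathbf{X}_{2[j,\cdot]})\}$. *)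

theory Defs
  imports "HOL-Probability.Probability"
begin

definition sq_loss :: "('x1 \<times> 'x2 \<Rightarrow> real) \<Rightarrow> real \<times> 'x1 \<times> 'x2 \<Rightarrow> real" where
  "sq_loss f z = (case z of (y, x1, x2) \<Rightarrow> (y - f (x1, x2))^2)"

definition f_lin :: "real^'p1 \<Rightarrow> real^'p2 \<Rightarrow> (real^'p1) \<times> (real^'p2) \<Rightarrow> real" where
  "f_lin b1 b2 x = fst x \<bullet> b1 + snd x \<bullet> b2"

definition e_orig :: "'a measure \<Rightarrow> (('x1 \<times> 'x2 \<Rightarrow> real) \<Rightarrow> real \<times> 'x1 \<times> 'x2 \<Rightarrow> real)
    \<Rightarrow> ('x1 \<times> 'x2 \<Rightarrow> real) \<Rightarrow> ('a \<Rightarrow> real) \<Rightarrow> ('a \<Rightarrow> 'x1) \<Rightarrow> ('a \<Rightarrow> 'x2) \<Rightarrow> real" where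
  "e_orig M L f Y X1 X2 = (\<integral>\<omega>. L f (Y \<omega>, X1 \<omega>, X2 \<omega>) \<partial>M)"

text \<open>e_switch(f) = E L(f,(Y^(b),X1^(a),X2^(b))) with (a),(b) independent copies,
  realised on the product space M \<Otimes> M (first coordinate = copy (a), second = copy (b)).\<close>
definition e_switch :: "'a measure \<Rightarrow> (('x1 \<times> 'x2 \<Rightarrow> real) \<Rightarrow> real \<times> 'x1 \<times> 'x2 \<Rightarrow> real)
    \<Rightarrow> ('x1 \<times> 'x2 \<Rightarrow> real) \<Rightarrow> ('a \<Rightarrow> real) \<Rightarrow> ('a \<Rightarrow> 'x1) \<Rightarrow> ('a \<Rightarrow> 'x2) \<Rightarrow> real" where
  "e_switch M L f Y X1 X2 =
     (\<integral>\<omega>. L f (Y (snd \<omega>), X1 (fst \<omega>), X2 (snd \<omega>)) \<partial>(M \<Otimes>\<^sub>M M))"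

definition e_switch_hat :: "(('x1 \<times> 'x2 \<Rightarrow> real) \<Rightarrow> real \<times> 'x1 \<times> 'x2 \<Rightarrow> real)
    \<Rightarrow> ('x1 \<times> 'x2 \<Rightarrow> real) \<Rightarrow> real^'n \<Rightarrow> 'x1^'n \<Rightarrow> 'x2^'n \<Rightarrow> real" where
  "e_switch_hat L f y X1 X2 =
     (\<Sum>i\<in>UNIV. \<Sum>j\<in>UNIV - {i}. L f (y $ j, X1 $ i, X2 $ j))
       / (real CARD('n) * (real CARD('n) - 1))"

definition covar :: "'a measure \<Rightarrow> ('a \<Rightarrow> real) \<Rightarrow> ('a \<Rightarrow> real) \<Rightarrow> real" where
  "covar M U V = (\<integral>\<omega>. (U \<omega> - (\<integral>\<eta>. U \<eta> \<partial>M)) * (V \<omega> - (\<integral>\<eta>. V \<eta> \<partial>M)) \<partial>M)"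

definition cov_sv :: "'a measure \<Rightarrow> ('a \<Rightarrow> real) \<Rightarrow> ('a \<Rightarrow> real^'p) \<Rightarrow> real^'p" where
  "cov_sv M Y X = (\<chi> i. covar M Y (\<lambda>\<omega>. X \<omega> $ i))"

definition cov_mat :: "'a measure \<Rightarrow> ('a \<Rightarrow> real^'q) \<Rightarrow> ('a \<Rightarrow> real^'p) \<Rightarrow> real^'p^'q" where
  "cov_mat M X2 X1 = (\<chi> j i. covar M (\<lambda>\<omega>. X2 \<omega> $ j) (\<lambda>\<omega>. X1 \<omega> $ i))"

definition Wmat :: "real^'n^'n" where
  "Wmat = (\<chi> i j. (1 - (if i = j then 1 else 0)) / (real CARD('n) - 1))"

end

theory Submission
  imports Defs
begin

(* Write A = X1'b1, B = X2'b2 and D = Y - B, so that the loss is (D - A)^2. In the switched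
   error A comes from an independent copy, so the cross term E[A D] is replaced by E[A] E[D];
   the two errors thus differ by 2 Cov(A, D) = 2 Cov(Y, A) - 2 Cov(A, B), and bilinearity of
   the covariance gives the vector form. In the sample, the sum of a_i u_j over the pairs j \<noteq> i
   equals (n - 1) a'Wu, which turns the double sum into the stated quadratic form. *)

definition square_integrable :: "'a measure \<Rightarrow> ('a \<Rightarrow> real) \<Rightarrow> bool" where
  "square_integrable M U \<longleftrightarrow> U \<in> borel_measurable M \<and> integrable M (\<lambda>\<omega>. (U \<omega>)^2)"

lemma (in finite_measure) integrable_if_square_integrable:
  "square_integrable M U \<Longrightarrow> integrable M U"
  unfolding square_integrable_def by (blast intro: square_integrable_imp_integrable)

lemma integrable_mult_if_square_integrable:
  assumes "square_integrable M U" "square_integrable M V"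
  shows "integrable M (\<lambda>\<omega>. U \<omega> * V \<omega>)"
proof (rule Bochner_Integration.integrable_bound)
  show "integrable M (\<lambda>\<omega>. (U \<omega>)^2 + (V \<omega>)^2)"
    using assms unfolding square_integrable_def by auto
  show "(\<lambda>\<omega>. U \<omega> * V \<omega>) \<in> borel_measurable M"
    using assms unfolding square_integrable_def by auto
  have "\<bar>u * v\<bar> \<le> u^2 + v^2" for u v :: real
    using sum_squares_bound[of u v] sum_squares_bound[of u "-v"] by (auto simp: abs_if)
  then show "AE \<omega> in M. norm (U \<omega> * V \<omega>) \<le> norm ((U \<omega>)^2 + (V \<omega>)^2)"
    by simp
qed

lemma square_integrable_diff:
  assumes "square_integrable M U" "square_integrable M V"
  shows "square_integrable M (\<lambda>\<omega>. U \<omega> - V \<omega>)"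
proof -
  have "integrable M (\<lambda>\<omega>. (U \<omega>)^2 + (V \<omega>)^2 - 2 * (U \<omega> * V \<omega>))"
    using assms integrable_mult_if_square_integrable[OF assms]
    unfolding square_integrable_def by auto
  moreover have "(\<lambda>\<omega>. U \<omega> - V \<omega>) \<in> borel_measurable M"
    using assms unfolding square_integrable_def by auto
  ultimately show ?thesis
    unfolding square_integrable_def by (simp add: power2_diff algebra_simps)
qed

lemma square_integrable_inner:
  fixes X :: "'a \<Rightarrow> 'b::{second_countable_topology, real_inner}"
  assumes "X \<in> borel_measurable M" and "integrable M (\<lambda>\<omega>. (norm (X \<omega>))^2)"
  shows "square_integrable M (\<lambda>\<omega>. X \<omega> \<bullet> b)"
  unfolding square_integrable_def
proof
  show "(\<lambda>\<omega>. X \<omega> \<bullet> b) \<in> borel_measurable M" using assms(1) by measurable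
  show "integrable M (\<lambda>\<omega>. (X \<omega> \<bullet> b)^2)"
  proof (rule Bochner_Integration.integrable_bound)
    show "integrable M (\<lambda>\<omega>. (norm b)^2 * (norm (X \<omega>))^2)" using assms(2) by simp
    show "(\<lambda>\<omega>. (X \<omega> \<bullet> b)^2) \<in> borel_measurable M" using assms(1) by measurable
    have "(x \<bullet> b)^2 \<le> (norm b)^2 * (norm x)^2" for x
      using Cauchy_Schwarz_ineq[of x b] by (simp add: power2_norm_eq_inner mult.commute)
    then show "AE \<omega> in M. norm ((X \<omega> \<bullet> b)^2) \<le> norm ((norm b)^2 * (norm (X \<omega>))^2)"
      by simp
  qed
qed

lemma (in pair_sigma_finite)
  fixes f g :: "_ \<Rightarrow> real"
  assumes f: "integrable M1 f" and g: "integrable M2 g"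
  shows integrable_mult_fst_snd: "integrable (M1 \<Otimes>\<^sub>M M2) (\<lambda>\<omega>. f (fst \<omega>) * g (snd \<omega>))"
    and integral_mult_fst_snd:
      "(\<integral>\<omega>. f (fst \<omega>) * g (snd \<omega>) \<partial>(M1 \<Otimes>\<^sub>M M2)) = (\<integral>x. f x \<partial>M1) * (\<integral>y. g y \<partial>M2)"
proof -
  have [measurable]: "f \<in> borel_measurable M1" "g \<in> borel_measurable M2"
    using f g by auto
  have "(\<integral>\<^sup>+\<omega>. norm (f (fst \<omega>) * g (snd \<omega>)) \<partial>(M1 \<Otimes>\<^sub>M M2))
      = (\<integral>\<^sup>+x. \<integral>\<^sup>+y. ennreal (norm (f x)) * ennreal (norm (g y)) \<partial>M2 \<partial>M1)"
    by (subst M2.nn_integral_fst[symmetric]) (auto simp: abs_mult ennreal_mult)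
  also have "\<dots> = (\<integral>\<^sup>+x. norm (f x) \<partial>M1) * (\<integral>\<^sup>+y. norm (g y) \<partial>M2)"
    by (simp add: nn_integral_cmult nn_integral_multc)
  also have "\<dots> < \<infinity>"
    using f g unfolding integrable_iff_bounded by (simp add: ennreal_mult_less_top)
  finally show I: "integrable (M1 \<Otimes>\<^sub>M M2) (\<lambda>\<omega>. f (fst \<omega>) * g (snd \<omega>))"
    unfolding integrable_iff_bounded by simp
  show "(\<integral>\<omega>. f (fst \<omega>) * g (snd \<omega>) \<partial>(M1 \<Otimes>\<^sub>M M2)) = (\<integral>x. f x \<partial>M1) * (\<integral>y. g y \<partial>M2)"
    using integral_fst'[OF I] by simp
qed

lemma covar_eq_integral_mult:
  assumes "prob_space M" "square_integrable M U" "square_integrable M V"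
  shows "covar M U V = (\<integral>\<omega>. U \<omega> * V \<omega> \<partial>M) - (\<integral>\<omega>. U \<omega> \<partial>M) * (\<integral>\<omega>. V \<omega> \<partial>M)"
proof -
  interpret prob_space M by fact
  define a b where "a = (\<integral>\<omega>. U \<omega> \<partial>M)" and "b = (\<integral>\<omega>. V \<omega> \<partial>M)"
  have "integrable M U" "integrable M V" "integrable M (\<lambda>\<omega>. U \<omega> * V \<omega>)"
    using assms integrable_if_square_integrable integrable_mult_if_square_integrable by auto
  then have "(\<integral>\<omega>. U \<omega> * V \<omega> - b * U \<omega> - a * V \<omega> + a * b \<partial>M)
      = (\<integral>\<omega>. U \<omega> * V \<omega> \<partial>M) - b * a - a * b + a * b"
    by (simp add: a_def b_def prob_space)
  then show ?thesis
    unfolding covar_def a_def[symmetric] b_def[symmetric] by (simp add: algebra_simps)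
qed

lemma covar_commute: "covar M U V = covar M V U"
  unfolding covar_def by (simp add: mult.commute)

lemma covar_diff_right:
  assumes "prob_space M" "square_integrable M U" "square_integrable M V" "square_integrable M W"
  shows "covar M U (\<lambda>\<omega>. V \<omega> - W \<omega>) = covar M U V - covar M U W"
proof -
  interpret prob_space M by fact
  have "integrable M V" "integrable M W"
    "integrable M (\<lambda>\<omega>. U \<omega> * V \<omega>)" "integrable M (\<lambda>\<omega>. U \<omega> * W \<omega>)"
    using assms integrable_if_square_integrable integrable_mult_if_square_integrable by auto
  then show ?thesis
    using assms square_integrable_diff[OF assms(3,4)]
    by (simp add: covar_eq_integral_mult right_diff_distrib algebra_simps)
qed

lemma covar_inner_right:
  fixes X :: "'a \<Rightarrow> real^'p"
  assumes "prob_space M" "square_integrable M U"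
    and "X \<in> borel_measurable M" "integrable M (\<lambda>\<omega>. (norm (X \<omega>))^2)"
  shows "covar M U (\<lambda>\<omega>. X \<omega> \<bullet> b) = cov_sv M U X \<bullet> b"
proof -
  interpret prob_space M by fact
  have comp: "square_integrable M (\<lambda>\<omega>. X \<omega> $ i)" for i
    using square_integrable_inner[OF assms(3,4), of "axis i 1"] by (simp add: cart_eq_inner_axis)
  have int: "integrable M (\<lambda>\<omega>. X \<omega> $ i)" "integrable M (\<lambda>\<omega>. U \<omega> * X \<omega> $ i)" for i
    using comp assms(2) integrable_if_square_integrable integrable_mult_if_square_integrable
    by blast+
  have "covar M U (\<lambda>\<omega>. X \<omega> \<bullet> b)
      = (\<integral>\<omega>. (\<Sum>i\<in>UNIV. b $ i * (U \<omega> * X \<omega> $ i)) \<partial>M)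
        - (\<integral>\<omega>. U \<omega> \<partial>M) * (\<integral>\<omega>. (\<Sum>i\<in>UNIV. b $ i * X \<omega> $ i) \<partial>M)"
    using covar_eq_integral_mult[OF assms(1,2) square_integrable_inner[OF assms(3,4)]]
    by (simp add: inner_vec_def sum_distrib_left algebra_simps)
  also have "\<dots> = (\<Sum>i\<in>UNIV. b $ i * (\<integral>\<omega>. U \<omega> * X \<omega> $ i \<partial>M))
        - (\<integral>\<omega>. U \<omega> \<partial>M) * (\<Sum>i\<in>UNIV. b $ i * (\<integral>\<omega>. X \<omega> $ i \<partial>M))"
    using int by (simp add: Bochner_Integration.integral_sum)
  also have "\<dots> = (\<Sum>i\<in>UNIV. b $ i * covar M U (\<lambda>\<omega>. X \<omega> $ i))"
    by (simp add: covar_eq_integral_mult[OF assms(1,2) comp] sum_distrib_left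
        sum_subtractf algebra_simps)
  finally show ?thesis
    by (simp add: cov_sv_def inner_vec_def mult.commute)
qed

lemma inner_cov_mat_mult_vec:
  fixes X1 :: "'a \<Rightarrow> real^'p1" and X2 :: "'a \<Rightarrow> real^'p2"
  assumes "prob_space M"
    and "X1 \<in> borel_measurable M" "integrable M (\<lambda>\<omega>. (norm (X1 \<omega>))^2)"
    and "X2 \<in> borel_measurable M" "integrable M (\<lambda>\<omega>. (norm (X2 \<omega>))^2)"
  shows "b2 \<bullet> (cov_mat M X2 X1 *v b1) = covar M (\<lambda>\<omega>. X1 \<omega> \<bullet> b1) (\<lambda>\<omega>. X2 \<omega> \<bullet> b2)"
proof -
  have "(cov_mat M X2 X1 *v b1) $ j = cov_sv M (\<lambda>\<omega>. X1 \<omega> \<bullet> b1) X2 $ j" for j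
  proof -
    have "square_integrable M (\<lambda>\<omega>. X2 \<omega> $ j)"
      using square_integrable_inner[OF assms(4,5), of "axis j 1"] by (simp add: cart_eq_inner_axis)
    then have "(cov_mat M X2 X1 *v b1) $ j = covar M (\<lambda>\<omega>. X2 \<omega> $ j) (\<lambda>\<omega>. X1 \<omega> \<bullet> b1)"
      using covar_inner_right[OF assms(1) _ assms(2,3)]
      by (simp add: cov_sv_def cov_mat_def matrix_vector_mult_def inner_vec_def mult.commute)
    then show ?thesis
      by (simp add: cov_sv_def covar_commute)
  qed
  then have "cov_mat M X2 X1 *v b1 = cov_sv M (\<lambda>\<omega>. X1 \<omega> \<bullet> b1) X2"
    by (simp add: vec_eq_iff)
  then show ?thesis
    using covar_inner_right[OF assms(1) square_integrable_inner[OF assms(2,3)] assms(4,5)]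
    by (simp add: inner_commute)
qed

lemma integral_switched_sq_diff:
  assumes "prob_space M" "square_integrable M D" "square_integrable M A"
  shows "(\<integral>\<omega>. (D (snd \<omega>) - A (fst \<omega>))^2 \<partial>(M \<Otimes>\<^sub>M M))
    = (\<integral>\<omega>. (D \<omega> - A \<omega>)^2 \<partial>M) + 2 * covar M A D"
proof -
  interpret prob_space M by fact
  have D: "integrable M D" "integrable M (\<lambda>\<omega>. D \<omega> * D \<omega>)"
    and A: "integrable M A" "integrable M (\<lambda>\<omega>. A \<omega> * A \<omega>)"
    and AD: "integrable M (\<lambda>\<omega>. A \<omega> * D \<omega>)"
    and one: "integrable M (\<lambda>_. 1)"
    using assms integrable_if_square_integrable integrable_mult_if_square_integrable by auto
  interpret pair_prob_space M M ..
  note prod = integrable_mult_fst_snd integral_mult_fst_snd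
  have "(\<integral>\<omega>. (D (snd \<omega>) - A (fst \<omega>))^2 \<partial>(M \<Otimes>\<^sub>M M))
    = (\<integral>\<omega>. 1 * (D (snd \<omega>) * D (snd \<omega>)) - 2 * (A (fst \<omega>) * D (snd \<omega>))
          + A (fst \<omega>) * A (fst \<omega>) * 1 \<partial>(M \<Otimes>\<^sub>M M))"
    by (simp add: power2_eq_square algebra_simps)
  also have "\<dots> = (\<integral>\<omega>. D \<omega> * D \<omega> \<partial>M) - 2 * ((\<integral>\<omega>. A \<omega> \<partial>M) * (\<integral>\<omega>. D \<omega> \<partial>M))
      + (\<integral>\<omega>. A \<omega> * A \<omega> \<partial>M)"
    using prod[OF one D(2)] prod[OF A(1) D(1)] prod[OF A(2) one]
    by (simp add: prob_space.prob_space[OF assms(1)])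
  also have "\<dots> = (\<integral>\<omega>. D \<omega> * D \<omega> - 2 * (A \<omega> * D \<omega>) + A \<omega> * A \<omega> \<partial>M) + 2 * covar M A D"
    using D A AD by (simp add: covar_eq_integral_mult[OF assms(1,3,2)])
  finally show ?thesis
    by (simp add: power2_eq_square algebra_simps)
qed

lemma e_switch_minus_e_orig_f_lin:
  fixes Y :: "'a \<Rightarrow> real" and X1 :: "'a \<Rightarrow> real^'p1" and X2 :: "'a \<Rightarrow> real^'p2"
  assumes "prob_space M" "square_integrable M Y"
    and "X1 \<in> borel_measurable M" "integrable M (\<lambda>\<omega>. (norm (X1 \<omega>))^2)"
    and "X2 \<in> borel_measurable M" "integrable M (\<lambda>\<omega>. (norm (X2 \<omega>))^2)"
  shows "e_switch M sq_loss (f_lin b1 b2) Y X1 X2 - e_orig M sq_loss (f_lin b1 b2) Y X1 X2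
    = 2 * (cov_sv M Y X1 \<bullet> b1) - 2 * (b2 \<bullet> (cov_mat M X2 X1 *v b1))"
proof -
  define A B where "A = (\<lambda>\<omega>. X1 \<omega> \<bullet> b1)" and "B = (\<lambda>\<omega>. X2 \<omega> \<bullet> b2)"
  have A: "square_integrable M A" and B: "square_integrable M B"
    unfolding A_def B_def using assms square_integrable_inner by auto
  have D: "square_integrable M (\<lambda>\<omega>. Y \<omega> - B \<omega>)"
    using square_integrable_diff[OF assms(2) B] .
  have "e_switch M sq_loss (f_lin b1 b2) Y X1 X2 - e_orig M sq_loss (f_lin b1 b2) Y X1 X2
    = 2 * covar M A (\<lambda>\<omega>. Y \<omega> - B \<omega>)"
    using integral_switched_sq_diff[OF assms(1) D A]
    by (simp add: e_switch_def e_orig_def sq_loss_def f_lin_def A_def B_def diff_add_eq_diff_diff_swap)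
  also have "\<dots> = 2 * covar M Y A - 2 * covar M A B"
    by (simp add: covar_diff_right[OF assms(1) A assms(2) B] covar_commute[of M A])
  finally show ?thesis
    using covar_inner_right[OF assms(1,2,3,4)] inner_cov_mat_mult_vec[OF assms(1,3-6)]
    by (simp add: A_def B_def)
qed

lemma sum_remove_eq_Wmat_mult:
  fixes v :: "real^'n"
  assumes "CARD('n) \<ge> 2"
  shows "(\<Sum>j\<in>UNIV - {i}. v $ j) = (real CARD('n) - 1) * (Wmat *v v) $ i"
proof -
  have "(Wmat *v v) $ i = (\<Sum>j\<in>UNIV. v $ j - (if i = j then v $ j else 0)) / (real CARD('n) - 1)"
    unfolding matrix_vector_mult_def Wmat_def sum_divide_distrib by (auto intro!: sum.cong)
  then show ?thesis
    using assms by (simp add: sum_diff1 sum_subtractf)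
qed

lemma transpose_Wmat: "transpose Wmat = Wmat"
  by (simp add: Wmat_def transpose_def vec_eq_iff eq_commute)

lemma Wmat_inner_commute: "(Wmat *v u) \<bullet> v = (Wmat *v v) \<bullet> u"
  by (metis dot_lmul_matrix inner_commute transpose_Wmat vector_transpose_matrix)

lemma sum_offdiag_sq_diff:
  fixes u a :: "real^'n"
  assumes "CARD('n) \<ge> 2"
  shows "(\<Sum>i\<in>UNIV. \<Sum>j\<in>UNIV - {i}. (u $ j - a $ i)^2)
    = (real CARD('n) - 1) * (u \<bullet> u - 2 * ((Wmat *v u) \<bullet> a) + a \<bullet> a)"
proof -
  have n: "real (CARD('n) - 1) = real CARD('n) - 1"
    using assms by simp
  have row_sum: "(\<Sum>j\<in>UNIV - {i}. (u $ j - a $ i)^2)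
      = (u \<bullet> u - (u $ i)^2) - 2 * (real CARD('n) - 1) * (a $ i * (Wmat *v u) $ i)
        + (real CARD('n) - 1) * (a $ i)^2" for i
  proof -
    have "(\<Sum>j\<in>UNIV - {i}. (u $ j - a $ i)^2)
        = (\<Sum>j\<in>UNIV - {i}. (u $ j)^2) - 2 * a $ i * (\<Sum>j\<in>UNIV - {i}. u $ j)
          + (real CARD('n) - 1) * (a $ i)^2"
      by (simp add: power2_diff sum.distrib sum_subtractf sum_distrib_left n algebra_simps)
    then show ?thesis
      by (simp add: sum_remove_eq_Wmat_mult[OF assms] sum_diff1 inner_vec_def power2_eq_square)
  qed
  show ?thesis
    unfolding row_sum
    by (simp add: sum_subtractf sum.distrib sum_distrib_left inner_vec_def
        power2_eq_square algebra_simps)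
qed

lemma inner_transpose_mult_vec: "(transpose A *v v) \<bullet> b = v \<bullet> (A *v b)"
  for A :: "real^'m^'n"
  by (simp add: dot_lmul_matrix)

lemma inner_transpose_matrix_mult_vec: "b \<bullet> ((transpose A ** B) *v d) = (A *v b) \<bullet> (B *v d)"
  for A :: "real^'m^'n" and B :: "real^'k^'n"
  by (metis inner_commute inner_transpose_mult_vec matrix_vector_mul_assoc)

lemma e_switch_hat_f_lin:
  fixes y :: "real^'n" and XX1 :: "real^'p1^'n" and XX2 :: "real^'p2^'n"
  assumes "CARD('n) \<ge> 2"
  shows "e_switch_hat sq_loss (f_lin b1 b2) y XX1 XX2
    = (y \<bullet> y
       - 2 * ((transpose XX1 *v (Wmat *v y)) \<bullet> b1 + (transpose XX2 *v y) \<bullet> b2)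
       + (b1 \<bullet> ((transpose XX1 ** XX1) *v b1)
          + b1 \<bullet> ((transpose XX1 ** Wmat ** XX2) *v b2)
          + b2 \<bullet> ((transpose XX2 ** Wmat ** XX1) *v b1)
          + b2 \<bullet> ((transpose XX2 ** XX2) *v b2))) / real CARD('n)"
proof -
  define a c where "a = XX1 *v b1" and "c = XX2 *v b2"
  have row: "f_lin b1 b2 (XX1 $ i, XX2 $ j) = a $ i + c $ j" for i j
    by (simp add: f_lin_def a_def c_def matrix_vector_mult_def inner_vec_def mult.commute)
  have "e_switch_hat sq_loss (f_lin b1 b2) y XX1 XX2
      = (\<Sum>i\<in>UNIV. \<Sum>j\<in>UNIV - {i}. ((y - c) $ j - a $ i)^2)
        / (real CARD('n) * (real CARD('n) - 1))"
    by (simp add: e_switch_hat_def sq_loss_def row algebra_simps)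
  also have "\<dots> = ((y - c) \<bullet> (y - c) - 2 * ((Wmat *v (y - c)) \<bullet> a) + a \<bullet> a) / real CARD('n)"
    using sum_offdiag_sq_diff[OF assms, of "y - c" a] assms by simp
  also have "\<dots> = (y \<bullet> y - 2 * ((Wmat *v y) \<bullet> a + y \<bullet> c)
      + (a \<bullet> a + a \<bullet> (Wmat *v c) + c \<bullet> (Wmat *v a) + c \<bullet> c)) / real CARD('n)"
    using Wmat_inner_commute[of a c] inner_commute[of c y] inner_commute[of a "Wmat *v c"]
      inner_commute[of c "Wmat *v a"]
    by (simp add: matrix_vector_mult_diff_distrib inner_diff_left inner_diff_right algebra_simps)
  finally show ?thesis
    unfolding matrix_mul_assoc[symmetric] inner_transpose_mult_vec inner_transpose_matrix_mult_vec
    unfolding matrix_vector_mul_assoc[symmetric] a_def[symmetric] c_def[symmetric] .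
qed

theorem theorem2:
  fixes M :: "'a measure"
    and Y :: "'a \<Rightarrow> real" and X1 :: "'a \<Rightarrow> real^'p1" and X2 :: "'a \<Rightarrow> real^'p2"
    and b1 :: "real^'p1" and b2 :: "real^'p2"
    and y :: "real^'n" and XX1 :: "real^'p1^'n" and XX2 :: "real^'p2^'n"
  assumes "prob_space M"
    and "Y \<in> borel_measurable M" and "X1 \<in> borel_measurable M" and "X2 \<in> borel_measurable M"
    and "integrable M (\<lambda>\<omega>. (Y \<omega>)^2)"
    and "integrable M (\<lambda>\<omega>. (norm (X1 \<omega>))^2)"
    and "integrable M (\<lambda>\<omega>. (norm (X2 \<omega>))^2)"
    and "CARD('n) \<ge> 2"
  shows "e_switch M sq_loss (f_lin b1 b2) Y X1 X2 - e_orig M sq_loss (f_lin b1 b2) Y X1 X2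
           = 2 * (cov_sv M Y X1 \<bullet> b1) - 2 * (b2 \<bullet> (cov_mat M X2 X1 *v b1))
       \<and> e_switch_hat sq_loss (f_lin b1 b2) y XX1 XX2
           = (y \<bullet> y
              - 2 * ((transpose XX1 *v (Wmat *v y)) \<bullet> b1 + (transpose XX2 *v y) \<bullet> b2)
              + (b1 \<bullet> ((transpose XX1 ** XX1) *v b1)
                 + b1 \<bullet> ((transpose XX1 ** Wmat ** XX2) *v b2)
                 + b2 \<bullet> ((transpose XX2 ** Wmat ** XX1) *v b1)
                 + b2 \<bullet> ((transpose XX2 ** XX2) *v b2))) / real CARD('n)"
proof -
  have "square_integrable M Y"
    using assms(2,5) unfolding square_integrable_def by simp
  then show ?thesis
    using e_switch_minus_e_orig_f_lin[OF assms(1) _ assms(3,6,4,7)] e_switch_hat_f_lin[OF assms(8)]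
    by simp
qed

end
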